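(* Let $\mathcal{D}\subset\mathbb{R}^N$ be open, bounded, connected, $x_0\in\mathcal{D}$, $\epsilon\in(0,1)$. Define on $(\bar\Omega,\bar{\mathcal{F}},\bar{\mathbb{P}})$ the random times $\bar\tau_0=0$, $$\bar\tau_{k+1}(\omega_{\mathcal{B}},\{w_i\}_{i\ge1})=\min\Big\{t\ge\bar\tau_k:\ \big|\mathcal{B}^N_t(\omega_{\mathcal{B}})-\mathcal{B}^N_{\bar\tau_k}(\omega_{\mathcal{B}})\big|=\big(\epsilon\wedge\operatorname{dist}(x_0+\mathcal{B}^N_{\bar\tau_k}(\omega_{\mathcal{B}}),\partial\mathcal{D})\big)|w_{k+1}|\Big\},$$ where $\bar\tau_k$ stands for $\bar\tau_k(\omega_{\mathcal{B}},\{w_i\})$, and $\bar\tau(\omega_{\mathcal{B}},\omega)=\min\{t\ge0:\ x_0+\mathcal{B}^N_t(\omega_{\mathcal{B}})\in\partial\mathcal{D}\}$. Then each $\bar\tau_k$ and $\bar\tau$ is a stopping time on $(\bar\Omega,\bar{\mathcal{F}},\bar{\mathbb{P}})$, and $\bar\tau_k\to\bar\tau$ as $k\to\infty$, $\bar{\mathbb{P}}$-a.s.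
   Context: $\{\mathcal{B}^N_t\}_{t\ge0}$ is a standard $N$-dimensional Brownian motion (started at $0$, continuous paths) on a probability space $(\Omega_{\mathcal{B}},\mathcal{F}_{\mathcal{B}},\mathbb{P}_{\mathcal{B}})$ with its filtration $\{\mathcal{F}_t\}_{t\ge0}$ (to which it is adapted). $(\Omega,\mathcal{F},\mathbb{P})$ is the countable product $\Omega=B_1(0)^{\mathbb{N}}$, $\omega=\{w_i\}_{i\ge1}$, of copies of $B_1(0)\subset\mathbb{R}^N$ with Borel $\sigma$-algebra and normalised Lebesgue measure. $(\bar\Omega,\bar{\mathcal{F}},\bar{\mathbb{P}})=(\Omega_{\mathcal{B}},\mathcal{F}_{\mathcal{B}},\mathbb{P}_{\mathcal{B}})\times(\Omega,\mathcal{F},\mathbb{P})$, with filtration $\bar{\mathcal{F}}_t=\mathcal{F}_t\times\mathcal{F}$. A stopping time on $(\bar\Omega,\bar{\mathcal{F}},\bar{\mathbb{P}})$ is a random variable $\bar\tau:\bar\Omega\to[0,\infty]$ with $\{\bar\tau\le t\}\in\bar{\mathcal{F}}_t$ for all $t\ge0$ and $\bar{\mathbb{P}}(\bar\tau=+\infty)=0$. *)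

theory Defs
  imports "HOL-Probability.Probability"
begin

definition is_filtration :: "'a measure \<Rightarrow> (real \<Rightarrow> 'a measure) \<Rightarrow> bool" where
  "is_filtration M F \<longleftrightarrow>
     (\<forall>t\<ge>0. space (F t) = space M \<and> sets (F t) \<subseteq> sets M) \<and>
     (\<forall>s t. 0 \<le> s \<longrightarrow> s \<le> t \<longrightarrow> sets (F s) \<subseteq> sets (F t))"

text \<open>Standard N-dimensional Brownian motion (N = CARD('n)) started at 0 with continuous
  paths, adapted to the filtration F, with increments B t - B s (s \<le> t) independent of F s
  and distributed as N(0, (t - s) I).\<close>
definition brownian_motion ::
  "'a measure \<Rightarrow> (real \<Rightarrow> 'a measure) \<Rightarrow> (real \<Rightarrow> 'a \<Rightarrow> real^'n) \<Rightarrow> bool" where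
  "brownian_motion M F B \<longleftrightarrow>
     prob_space M \<and> is_filtration M F \<and>
     (\<forall>t\<ge>0. B t \<in> borel_measurable (F t)) \<and>
     (\<forall>\<omega>\<in>space M. B 0 \<omega> = 0 \<and> continuous_on {0..} (\<lambda>t. B t \<omega>)) \<and>
     (\<forall>s t. 0 \<le> s \<longrightarrow> s < t \<longrightarrow>
        distr M borel (\<lambda>\<omega>. B t \<omega> - B s \<omega>) =
          density lborel (\<lambda>x. ennreal (\<Prod>i\<in>UNIV. normal_density 0 (sqrt (t - s)) (x $ i))) \<and>
        (\<forall>A\<in>sets (F s). \<forall>C\<in>sets borel.
           measure M (A \<inter> {\<omega>\<in>space M. B t \<omega> - B s \<omega> \<in> C}) =
           measure M A * measure M {\<omega>\<in>space M. B t \<omega> - B s \<omega> \<in> C}))"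

definition ball_seq_space :: "(nat \<Rightarrow> real^'n) measure" where
  "ball_seq_space = PiM UNIV (\<lambda>_. uniform_measure (restrict_space lborel (ball 0 1)) (ball 0 1))"

definition bar_space :: "'a measure \<Rightarrow> ('a \<times> (nat \<Rightarrow> real^'n)) measure" where
  "bar_space M = M \<Otimes>\<^sub>M ball_seq_space"

definition bar_filtration ::
  "(real \<Rightarrow> 'a measure) \<Rightarrow> real \<Rightarrow> ('a \<times> (nat \<Rightarrow> real^'n)) measure" where
  "bar_filtration F t = F t \<Otimes>\<^sub>M ball_seq_space"

definition is_stopping_time ::
  "'b measure \<Rightarrow> (real \<Rightarrow> 'b measure) \<Rightarrow> ('b \<Rightarrow> ennreal) \<Rightarrow> bool" where
  "is_stopping_time P G T \<longleftrightarrow>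
     T \<in> borel_measurable P \<and>
     (\<forall>t\<ge>0. {x\<in>space P. T x \<le> ennreal t} \<in> sets (G t)) \<and>
     emeasure P {x\<in>space P. T x = \<infinity>} = 0"

text \<open>The random times tau_k (values in [0,\<infinity>], min of empty set = \<infinity>).
  Here w_{k+1} is the k-th coordinate ws k of the sequence ws.\<close>
primrec tau_seq ::
  "(real^'n) set \<Rightarrow> real^'n \<Rightarrow> real \<Rightarrow> (real \<Rightarrow> 'a \<Rightarrow> real^'n) \<Rightarrow> nat \<Rightarrow>
    'a \<times> (nat \<Rightarrow> real^'n) \<Rightarrow> ennreal" where
  "tau_seq D x0 \<epsilon> B 0 = (\<lambda>_. 0)"
| "tau_seq D x0 \<epsilon> B (Suc k) = (\<lambda>(\<omega>, ws).
     (let s = tau_seq D x0 \<epsilon> B k (\<omega>, ws) in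
      if s = \<infinity> then \<infinity>
      else Inf {ennreal t | t. enn2real s \<le> t \<and>
              norm (B t \<omega> - B (enn2real s) \<omega>) =
              min \<epsilon> (infdist (x0 + B (enn2real s) \<omega>) (frontier D)) * norm (ws k)}))"

definition tau_exit ::
  "(real^'n) set \<Rightarrow> real^'n \<Rightarrow> (real \<Rightarrow> 'a \<Rightarrow> real^'n) \<Rightarrow> 'a \<times> (nat \<Rightarrow> real^'n) \<Rightarrow> ennreal" where
  "tau_exit D x0 B = (\<lambda>(\<omega>, ws). Inf {ennreal t | t. 0 \<le> t \<and> x0 + B t \<omega> \<in> frontier D})"

end

theory Submission
  imports Defs
begin

(*
  Both \<tau> and the \<tau>_k are first hitting times of closed sets by continuous paths, so the event
  {\<tau> \<le> t} can be expressed through countably many rational times in [0, t]. For \<tau>_(k+1) one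
  also uses that B at the random time min \<tau>_k t is F_t-measurable, and adaptedness follows by
  induction on k. Almost surely some unit-time increment of B exceeds the diameter of D
  (independent Gaussian increments cannot all stay in a fixed ball), so the path reaches the
  boundary, \<tau> is finite and \<tau>_k \<le> \<tau> for all k. The \<tau>_k increase to some L \<le> \<tau>. If L < \<tau>,
  then x0 + B(L) has positive distance to the boundary, so the step radii
  min \<epsilon> (dist (x0 + B(\<tau>_k), \<partial>D)) |w_(k+1)| stay bounded below whenever |w_(k+1)| \<ge> 1/2,
  which happens infinitely often almost surely, while by continuity the steps
  |B(\<tau>_(k+1)) - B(\<tau>_k)| tend to 0.
*)

section \<open>Hitting times of continuous paths\<close>

lemma Inf_ennreal_image_closed:
  fixes S :: "real set"
  assumes "closed S" "S \<noteq> {}" "\<And>u. u \<in> S \<Longrightarrow> 0 \<le> u"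
  shows "Inf (ennreal ` S) = ennreal (Inf S)" and "Inf S \<in> S"
proof -
  have bdd: "bdd_below S" using assms(3) by (auto simp: bdd_below_def)
  show "Inf S \<in> S" by (rule closed_contains_Inf[OF assms(2) bdd assms(1)])
  show "Inf (ennreal ` S) = ennreal (Inf S)"
  proof (rule antisym)
    show "Inf (ennreal ` S) \<le> ennreal (Inf S)" using \<open>Inf S \<in> S\<close> by (intro Inf_lower) auto
    show "ennreal (Inf S) \<le> Inf (ennreal ` S)"
      using cInf_lower[OF _ bdd] by (intro Inf_greatest) (auto intro: ennreal_leI)
  qed
qed

lemma Inf_ennreal_image_le_iff:
  fixes S :: "real set"
  assumes "closed S" "\<And>u. u \<in> S \<Longrightarrow> 0 \<le> u" "0 \<le> t"
  shows "Inf (ennreal ` S) \<le> ennreal t \<longleftrightarrow> (\<exists>u\<in>S. u \<le> t)"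
proof
  assume le: "Inf (ennreal ` S) \<le> ennreal t"
  then have "S \<noteq> {}" by (auto simp: top_unique)
  with assms le show "\<exists>u\<in>S. u \<le> t"
    using Inf_ennreal_image_closed[of S] by auto
next
  assume "\<exists>u\<in>S. u \<le> t"
  then obtain u where "u \<in> S" "u \<le> t" by blast
  then have "Inf (ennreal ` S) \<le> ennreal u" by (intro Inf_lower) auto
  also have "\<dots> \<le> ennreal t" using \<open>u \<le> t\<close> by (rule ennreal_leI)
  finally show "Inf (ennreal ` S) \<le> ennreal t" .
qed

lemma closed_hitting_set:
  fixes f :: "real \<Rightarrow> 'a::topological_space"
  assumes "continuous_on {s..} f" "closed K"
  shows "closed {u. s \<le> u \<and> f u \<in> K}"
proof -
  have "{u. s \<le> u \<and> f u \<in> K} = {u \<in> {s..}. f u \<in> K}" by auto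
  then show ?thesis using continuous_closed_preimage[OF assms(1) closed_atLeast assms(2)]
    by (simp add: vimage_def Int_def conj_commute)
qed

text \<open>Points are approximated by rationals from the right, which is impossible at \<open>t\<close>
  itself; hence \<open>t\<close> is added.\<close>
definition rat_grid :: "real \<Rightarrow> real set" where
  "rat_grid t = insert t {q \<in> \<rat>. 0 \<le> q \<and> q \<le> t}"

lemma countable_rat_grid: "countable (rat_grid t)"
  unfolding rat_grid_def using countable_rat by (auto intro: countable_subset)

lemma rat_grid_bounds: "q \<in> rat_grid t \<Longrightarrow> 0 \<le> t \<Longrightarrow> 0 \<le> q \<and> q \<le> t"
  unfolding rat_grid_def by auto

lemma rat_grid_approx:
  fixes h :: "real \<Rightarrow> real"
  assumes cont: "continuous_on {s..t} h" and "0 \<le> s" "s \<le> u" "u \<le> t" "0 < e"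
  obtains q where "q \<in> rat_grid t" "s \<le> q" "h u - e < h q"
proof (cases "u = t")
  case True
  then show ?thesis using assms by (intro that[of t]) (auto simp: rat_grid_def)
next
  case False
  obtain d where d: "d > 0" "\<forall>x\<in>{s..t}. dist x u < d \<longrightarrow> dist (h x) (h u) < e"
    using cont assms(3-5) unfolding continuous_on_iff by (metis atLeastAtMost_iff)
  have "u < min (u + d) t" using False assms(4) d(1) by simp
  then obtain q where q: "q \<in> \<rat>" "u < q" "q < min (u + d) t"
    using Rats_dense_in_real by blast
  then have "dist (h q) (h u) < e" using d assms(3) by (auto simp: dist_real_def)
  moreover have "q \<in> rat_grid t" using q assms(2,3) by (auto simp: rat_grid_def)
  ultimately show ?thesis using q assms(3) by (intro that[of q]) (auto simp: dist_real_def)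
qed

text \<open>This replaces the quantifier over \<open>[s, t]\<close> by countably many rational times,
  which is what makes the events \<open>{\<tau> \<le> t}\<close> measurable.\<close>
lemma exists_nonneg_iff_rat_grid:
  fixes h :: "real \<Rightarrow> real"
  assumes cont: "continuous_on {s..t} h" and "0 \<le> s" "s \<le> t"
  shows "(\<exists>u\<in>{s..t}. 0 \<le> h u) \<longleftrightarrow> (\<forall>m::nat. \<exists>q\<in>rat_grid t. s \<le> q \<and> - inverse (real (Suc m)) < h q)"
proof
  assume "\<exists>u\<in>{s..t}. 0 \<le> h u"
  then obtain u where u: "s \<le> u" "u \<le> t" "0 \<le> h u" by auto
  show "\<forall>m::nat. \<exists>q\<in>rat_grid t. s \<le> q \<and> - inverse (real (Suc m)) < h q"
  proof
    fix m :: nat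
    obtain q where "q \<in> rat_grid t" "s \<le> q" "h u - inverse (real (Suc m)) < h q"
      using rat_grid_approx[OF cont \<open>0 \<le> s\<close> u(1,2), of "inverse (real (Suc m))"] by auto
    with u(3) show "\<exists>q\<in>rat_grid t. s \<le> q \<and> - inverse (real (Suc m)) < h q" by force
  qed
next
  assume approx: "\<forall>m::nat. \<exists>q\<in>rat_grid t. s \<le> q \<and> - inverse (real (Suc m)) < h q"
  obtain x where x: "x \<in> {s..t}" "\<forall>y\<in>{s..t}. h y \<le> h x"
    using continuous_attains_sup[OF compact_Icc _ cont] assms by auto
  have "0 \<le> h x"
  proof (rule ccontr)
    assume "\<not> 0 \<le> h x"
    then have "0 < - h x" by simp
    then obtain m where m: "inverse (real (Suc m)) < - h x" using reals_Archimedean by blast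
    from approx obtain q where q: "q \<in> rat_grid t" "s \<le> q" "- inverse (real (Suc m)) < h q" by blast
    have "h q \<le> h x" using x q rat_grid_bounds[OF q(1)] assms by auto
    then show False using m q by linarith
  qed
  then show "\<exists>u\<in>{s..t}. 0 \<le> h u" using x by blast
qed

lemma continuous_path_stays_inside:
  fixes p :: "real \<Rightarrow> 'a::topological_space"
  assumes "continuous_on {a..b} p" "a \<le> b" "p a \<in> D" "\<And>v. v \<in> {a..b} \<Longrightarrow> p v \<notin> frontier D"
  shows "p b \<in> D"
proof (rule ccontr)
  assume "p b \<notin> D"
  then have "p b \<in> p ` {a..b} - D" "p a \<in> p ` {a..b} \<inter> D" using assms(2,3) by auto
  then have "p ` {a..b} - D \<noteq> {}" "p ` {a..b} \<inter> D \<noteq> {}" by blast+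
  moreover have "connected (p ` {a..b})"
    by (intro connected_continuous_image assms(1) connected_Icc)
  ultimately have "p ` {a..b} \<inter> frontier D \<noteq> {}" using connected_Int_frontier by blast
  then show False using assms(4) by auto
qed

lemma continuous_path_hits_frontier:
  fixes p :: "real \<Rightarrow> 'a::real_normed_vector"
  assumes cont: "continuous_on {0..} p" and "p 0 \<in> D" and bound: "\<And>x. x \<in> D \<Longrightarrow> norm x \<le> R"
    and "0 \<le> s" "0 \<le> u" and far: "2 * R < norm (p u - p s)"
  shows "\<exists>v\<ge>0. p v \<in> frontier D"
proof (rule ccontr)
  assume no_hit: "\<not> (\<exists>v\<ge>0. p v \<in> frontier D)"
  have inside: "p v \<in> D" if "0 \<le> v" for v
  proof (rule continuous_path_stays_inside[of 0 v])
    show "continuous_on {0..v} p" by (rule continuous_on_subset[OF cont]) auto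
  qed (use that \<open>p 0 \<in> D\<close> no_hit in auto)
  have "norm (p u - p s) \<le> norm (p u) + norm (p s)" by (rule norm_triangle_ineq4)
  also have "\<dots> \<le> 2 * R" using bound[OF inside[OF \<open>0 \<le> u\<close>]] bound[OF inside[OF \<open>0 \<le> s\<close>]] by simp
  finally show False using far by simp
qed

lemma first_hit_le_iff:
  fixes p :: "real \<Rightarrow> 'a::metric_space"
  assumes "continuous_on {0..} p" "closed K" "K \<noteq> {}" "0 \<le> t"
  shows "Inf (ennreal ` {u. 0 \<le> u \<and> p u \<in> K}) \<le> ennreal t \<longleftrightarrow>
         (\<exists>u\<in>{0..t}. 0 \<le> - infdist (p u) K)"
proof -
  have "Inf (ennreal ` {u. 0 \<le> u \<and> p u \<in> K}) \<le> ennreal t \<longleftrightarrow> (\<exists>u\<in>{u. 0 \<le> u \<and> p u \<in> K}. u \<le> t)"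
    using assms by (intro Inf_ennreal_image_le_iff closed_hitting_set) auto
  also have "\<dots> \<longleftrightarrow> (\<exists>u\<in>{0..t}. 0 \<le> - infdist (p u) K)"
  proof -
    have "p u \<in> K \<longleftrightarrow> 0 \<le> - infdist (p u) K" for u
      using in_closed_iff_infdist_zero[OF assms(2,3)] infdist_nonneg[of "p u" K] by auto
    then show ?thesis by auto
  qed
  finally show ?thesis .
qed

lemma sphere_hitting_set_closed:
  fixes b :: "real \<Rightarrow> 'a::real_normed_vector"
  assumes "continuous_on {s..} b"
  shows "closed {u. s \<le> u \<and> norm (b u - b s) = r}"
proof -
  have "continuous_on {s..} (\<lambda>u. norm (b u - b s))" by (intro continuous_intros assms)
  from closed_hitting_set[OF this, of "{r}"] show ?thesis by simp
qed

lemma sphere_hit_between: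
  fixes b :: "real \<Rightarrow> 'a::real_normed_vector"
  assumes "continuous_on {s..} b" "s \<le> u" "0 \<le> r" "r \<le> norm (b u - b s)"
  obtains v where "s \<le> v" "v \<le> u" "norm (b v - b s) = r"
proof -
  have "continuous_on {s..u} (\<lambda>v. norm (b v - b s))"
    by (intro continuous_intros continuous_on_subset[OF assms(1)]) auto
  then show ?thesis using IVT'[of "\<lambda>v. norm (b v - b s)" s r u] assms that by auto
qed

lemma first_sphere_hit_le_iff:
  fixes b :: "real \<Rightarrow> 'a::real_normed_vector"
  assumes cont: "continuous_on {s..} b" and "0 \<le> s" "0 \<le> r" "0 \<le> t"
  shows "Inf (ennreal ` {u. s \<le> u \<and> norm (b u - b s) = r}) \<le> ennreal t \<longleftrightarrow>
         s \<le> t \<and> (\<exists>u\<in>{s..t}. 0 \<le> norm (b u - b s) - r)"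
proof -
  let ?H = "{u. s \<le> u \<and> norm (b u - b s) = r}"
  have "Inf (ennreal ` ?H) \<le> ennreal t \<longleftrightarrow> (\<exists>u\<in>?H. u \<le> t)"
    using assms by (intro Inf_ennreal_image_le_iff sphere_hitting_set_closed) auto
  also have "\<dots> \<longleftrightarrow> s \<le> t \<and> (\<exists>u\<in>{s..t}. 0 \<le> norm (b u - b s) - r)"
  proof
    assume "\<exists>u\<in>?H. u \<le> t"
    then show "s \<le> t \<and> (\<exists>u\<in>{s..t}. 0 \<le> norm (b u - b s) - r)" by force
  next
    assume "s \<le> t \<and> (\<exists>u\<in>{s..t}. 0 \<le> norm (b u - b s) - r)"
    then obtain u where u: "s \<le> u" "u \<le> t" "r \<le> norm (b u - b s)" by auto
    then obtain v where "s \<le> v" "v \<le> u" "norm (b v - b s) = r"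
      using sphere_hit_between[OF cont] assms(3) by blast
    then show "\<exists>u\<in>?H. u \<le> t" using u by (intro bexI[of _ v]) auto
  qed
  finally show ?thesis .
qed

lemma first_sphere_hit_exists:
  fixes b :: "real \<Rightarrow> 'a::real_normed_vector"
  assumes cont: "continuous_on {s..} b" and "0 \<le> s" "s \<le> e" "0 \<le> r" "r \<le> norm (b e - b s)"
  obtains s' where "s \<le> s'" "s' \<le> e" "norm (b s' - b s) = r"
    "Inf (ennreal ` {u. s \<le> u \<and> norm (b u - b s) = r}) = ennreal s'"
proof -
  let ?H = "{u. s \<le> u \<and> norm (b u - b s) = r}"
  obtain v where v: "v \<in> ?H" "v \<le> e" using sphere_hit_between[OF cont assms(3-5)] by blast
  have H: "closed ?H" "?H \<noteq> {}" "\<And>u. u \<in> ?H \<Longrightarrow> 0 \<le> u"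
    using sphere_hitting_set_closed[OF cont] v assms(2) by auto
  have "Inf ?H \<le> v" using v(1) H(3) by (intro cInf_lower) (auto simp: bdd_below_def)
  with Inf_ennreal_image_closed[OF H] v show ?thesis by (intro that[of "Inf ?H"]) auto
qed

text \<open>Near a point off the boundary the factors \<open>min \<epsilon> (infdist \<dots>)\<close> stay bounded below,
  while by continuity the steps tend to \<open>0\<close>.\<close>
lemma step_weights_tendsto_zero:
  fixes b :: "real \<Rightarrow> 'a::real_normed_vector" and s :: "nat \<Rightarrow> real"
  assumes cont: "continuous_on {0..} b" and "frontier D \<noteq> {}"
    and lim: "s \<longlonglongrightarrow> L" and "\<And>k. 0 \<le> s k" "0 \<le> L" and "x0 + b L \<notin> frontier D"
    and step: "\<And>k. norm (b (s (Suc k)) - b (s k)) =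
                    min \<epsilon> (infdist (x0 + b (s k)) (frontier D)) * norm (w k)"
    and "0 < \<epsilon>"
  shows "(\<lambda>k. norm (w k)) \<longlonglongrightarrow> 0"
proof -
  have "0 < infdist (x0 + b L) (frontier D)"
    using assms by (intro infdist_pos_not_in_closed frontier_closed)
  define c where "c = min \<epsilon> (infdist (x0 + b L) (frontier D))"
  have "0 < c" unfolding c_def using \<open>0 < infdist _ _\<close> \<open>0 < \<epsilon>\<close> by simp
  have b_lim: "(\<lambda>k. b (s k)) \<longlonglongrightarrow> b L"
    using assms(4,5) by (intro continuous_on_tendsto_compose[OF cont lim]) auto
  have factor: "(\<lambda>k. min \<epsilon> (infdist (x0 + b (s k)) (frontier D))) \<longlonglongrightarrow> c"
    unfolding c_def by (intro tendsto_intros b_lim)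
  have "(\<lambda>k. norm (b (s (Suc k)) - b (s k))) \<longlonglongrightarrow> norm (b L - b L)"
    by (intro tendsto_intros b_lim LIMSEQ_Suc[OF b_lim])
  then have "(\<lambda>k. norm (b (s (Suc k)) - b (s k)) / min \<epsilon> (infdist (x0 + b (s k)) (frontier D)))
               \<longlonglongrightarrow> 0"
    using tendsto_divide[OF _ factor] \<open>0 < c\<close> by force
  moreover have "\<forall>\<^sub>F k in sequentially.
      norm (b (s (Suc k)) - b (s k)) / min \<epsilon> (infdist (x0 + b (s k)) (frontier D)) = norm (w k)"
    using order_tendstoD(1)[OF factor \<open>0 < c\<close>] by eventually_elim (auto simp: step)
  ultimately show ?thesis by (rule Lim_transform_eventually)
qed

lemma increasing_steps_tendsto_exit:
  fixes b :: "real \<Rightarrow> 'a::real_normed_vector" and s :: "nat \<Rightarrow> real"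
  assumes cont: "continuous_on {0..} b" and "open D" "frontier D \<noteq> {}"
    and s: "incseq s" "\<And>k. 0 \<le> s k" "\<And>k. s k \<le> e"
    and inside: "\<And>u. 0 \<le> u \<Longrightarrow> u < e \<Longrightarrow> x0 + b u \<in> D"
    and step: "\<And>k. norm (b (s (Suc k)) - b (s k)) =
                    min \<epsilon> (infdist (x0 + b (s k)) (frontier D)) * norm (w k)"
    and "0 < \<epsilon>" "0 < r" and freq: "\<exists>\<^sub>F k in sequentially. r \<le> norm (w k)"
  shows "s \<longlonglongrightarrow> e"
proof -
  have bdd: "bdd_above (range s)" using s(3) by (auto simp: bdd_above_def)
  define L where "L = Sup (range s)"
  have lim: "s \<longlonglongrightarrow> L" unfolding L_def by (rule LIMSEQ_incseq_SUP[OF bdd s(1)])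
  have "L \<le> e" unfolding L_def using s(3) by (intro cSup_least) auto
  have "0 \<le> L" using s(2)[of 0] cSup_upper[OF _ bdd, of "s 0"] unfolding L_def by auto
  show ?thesis
  proof (cases "L = e")
    case True
    with lim show ?thesis by simp
  next
    case False
    with \<open>L \<le> e\<close> have "x0 + b L \<in> D" using inside \<open>0 \<le> L\<close> by simp
    with \<open>open D\<close> have "x0 + b L \<notin> frontier D" by (simp add: frontier_def interior_open)
    then have "(\<lambda>k. norm (w k)) \<longlonglongrightarrow> 0"
      using step_weights_tendsto_zero[OF cont \<open>frontier D \<noteq> {}\<close> lim s(2) \<open>0 \<le> L\<close> _ step \<open>0 < \<epsilon>\<close>]
      by blast
    from order_tendstoD(2)[OF this \<open>0 < r\<close>]
    have "\<forall>\<^sub>F k in sequentially. \<not> r \<le> norm (w k)" by eventually_elim simp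
    with freq show ?thesis by (simp add: not_frequently[symmetric])
  qed
qed

section \<open>Measurability at random times and null sets\<close>

lemma ennreal_le_power_imp_zero:
  fixes x :: ennreal and q :: real
  assumes "0 \<le> q" "q < 1" "\<And>n. x \<le> ennreal (q ^ n)"
  shows "x = 0"
proof -
  have "(\<lambda>n. ennreal (q ^ n)) \<longlonglongrightarrow> ennreal 0"
    using assms by (intro tendsto_ennrealI LIMSEQ_power_zero) simp
  then have "x \<le> 0"
    using assms(3) by (intro tendsto_lowerbound[OF _ _ trivial_limit_sequentially]) auto
  then show ?thesis by simp
qed

lemma borel_measurable_at_random_time:
  fixes Z :: "real \<Rightarrow> 'b \<Rightarrow> 'c::metric_space"
  assumes "0 \<le> t"
    and Z: "\<And>u. 0 \<le> u \<Longrightarrow> u \<le> t \<Longrightarrow> Z u \<in> borel_measurable N"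
    and cont: "\<And>x. x \<in> space N \<Longrightarrow> continuous_on {0..t} (\<lambda>u. Z u x)"
    and g: "g \<in> borel_measurable N" "\<And>x. x \<in> space N \<Longrightarrow> 0 \<le> g x \<and> g x \<le> t"
  shows "(\<lambda>x. Z (g x) x) \<in> borel_measurable N"
proof (rule borel_measurable_LIMSEQ_metric)
  define gn where "gn n x = min t (real (nat \<lceil>2^n * g x\<rceil>) / 2^n)" for n x
  fix n :: nat
  have "(\<lambda>x. nat \<lceil>2^n * g x\<rceil>) \<in> measurable N (count_space UNIV)" using g(1) by measurable
  moreover have "(\<lambda>x. Z (min t (real j / 2^n)) x) \<in> borel_measurable N" for j :: nat
    using \<open>0 \<le> t\<close> by (intro Z) auto
  ultimately show "(\<lambda>x. Z (gn n x) x) \<in> borel_measurable N"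
    unfolding gn_def by (rule measurable_compose_countable[rotated])
next
  define gn where "gn n x = min t (real (nat \<lceil>2^n * g x\<rceil>) / 2^n)" for n x
  fix x assume x: "x \<in> space N"
  have bounds: "g x \<le> gn n x \<and> gn n x \<le> g x + (1/2)^n" for n
  proof -
    have pos: "(0::real) < 2^n" by simp
    have nat_ceil: "real (nat \<lceil>2^n * g x\<rceil>) = of_int \<lceil>2^n * g x\<rceil>" using g(2)[OF x] by simp
    have "g x \<le> real (nat \<lceil>2^n * g x\<rceil>) / 2^n"
      using le_of_int_ceiling[of "2^n * g x"] pos nat_ceil by (simp add: field_simps)
    moreover have "real (nat \<lceil>2^n * g x\<rceil>) / 2^n \<le> g x + (1/2)^n"
      using of_int_ceiling_le_add_one[of "2^n * g x"] pos nat_ceil by (simp add: field_simps)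
    ultimately show ?thesis using g(2)[OF x] unfolding gn_def by auto
  qed
  have upper: "(\<lambda>n. g x + (1/2::real)^n) \<longlonglongrightarrow> g x"
    using tendsto_add[OF tendsto_const LIMSEQ_power_zero[of "1/2::real"]] by simp
  have "(\<lambda>n. gn n x) \<longlonglongrightarrow> g x"
  proof (rule tendsto_sandwich[OF _ _ tendsto_const upper])
    show "\<forall>\<^sub>F n in sequentially. g x \<le> gn n x" using bounds by simp
    show "\<forall>\<^sub>F n in sequentially. gn n x \<le> g x + (1/2)^n" using bounds by simp
  qed
  moreover have "gn n x \<in> {0..t}" for n using bounds[of n] g(2)[OF x] unfolding gn_def by auto
  ultimately show "(\<lambda>n. Z (gn n x) x) \<longlonglongrightarrow> Z (g x) x"
    using g(2)[OF x] by (intro continuous_on_tendsto_compose[OF cont[OF x]]) auto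
qed

definition trunc_time :: "('b \<Rightarrow> ennreal) \<Rightarrow> real \<Rightarrow> 'b \<Rightarrow> real" where
  "trunc_time \<sigma> t x = (if \<sigma> x \<le> ennreal t then enn2real (\<sigma> x) else t)"

lemma trunc_time_bounds: "0 \<le> t \<Longrightarrow> 0 \<le> trunc_time \<sigma> t x \<and> trunc_time \<sigma> t x \<le> t"
  using enn2real_mono[of "\<sigma> x" "ennreal t"] by (auto simp: trunc_time_def)

lemma trunc_time_le_iff:
  assumes "0 \<le> y" "y < t"
  shows "trunc_time \<sigma> t x \<le> y \<longleftrightarrow> \<sigma> x \<le> ennreal y"
proof (cases "\<sigma> x \<le> ennreal t")
  case True
  then have "\<sigma> x \<noteq> \<top>" by (auto simp: top_unique)
  then obtain a where "\<sigma> x = ennreal a" "0 \<le> a" by (cases "\<sigma> x") auto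
  then show ?thesis using True assms by (simp add: trunc_time_def)
next
  case False
  have "\<not> \<sigma> x \<le> ennreal y"
  proof
    assume "\<sigma> x \<le> ennreal y"
    also have "ennreal y \<le> ennreal t" using assms by (intro ennreal_leI) simp
    finally show False using False by simp
  qed
  then show ?thesis using False assms by (simp add: trunc_time_def)
qed

lemma borel_measurable_trunc_time:
  assumes "0 \<le> t" and adapted: "\<And>a. 0 \<le> a \<Longrightarrow> a \<le> t \<Longrightarrow> {x\<in>space N. \<sigma> x \<le> ennreal a} \<in> sets N"
  shows "trunc_time \<sigma> t \<in> borel_measurable N"
proof (rule borel_measurableI_le)
  fix y :: real
  note bounds = trunc_time_bounds[OF \<open>0 \<le> t\<close>, of \<sigma>]
  consider "y < 0" | "t \<le> y" | "0 \<le> y" "y < t" by linarith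
  then show "{x\<in>space N. trunc_time \<sigma> t x \<le> y} \<in> sets N"
  proof cases
    case 1
    then have "\<not> trunc_time \<sigma> t x \<le> y" for x using bounds[of x] by linarith
    then have "{x\<in>space N. trunc_time \<sigma> t x \<le> y} = {}" by blast
    then show ?thesis by (simp only: sets.empty_sets)
  next
    case 2
    then have "trunc_time \<sigma> t x \<le> y" for x using bounds[of x] by linarith
    then have "{x\<in>space N. trunc_time \<sigma> t x \<le> y} = space N" by blast
    then show ?thesis by (simp only: sets.top)
  next
    case 3
    then have "{x\<in>space N. trunc_time \<sigma> t x \<le> y} = {x\<in>space N. \<sigma> x \<le> ennreal y}"
      by (simp add: trunc_time_le_iff)
    then show ?thesis using adapted 3 by simp
  qed
qed

lemma is_stopping_timeI:
  assumes sub: "\<And>t. 0 \<le> t \<Longrightarrow> sets (G t) \<subseteq> sets P"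
    and adapted: "\<And>t. 0 \<le> t \<Longrightarrow> {x\<in>space P. T x \<le> ennreal t} \<in> sets (G t)"
    and finite: "AE x in P. T x \<noteq> \<infinity>"
  shows "is_stopping_time P G T"
proof -
  have T_meas: "T \<in> borel_measurable P"
  proof (rule borel_measurableI_le)
    fix y :: ennreal
    show "{x\<in>space P. T x \<le> y} \<in> sets P"
    proof (cases y)
      case (real r)
      then show ?thesis using adapted[of r] sub[of r] by auto
    qed simp
  qed
  have "{x\<in>space P. T x = \<infinity>} \<in> sets P" using T_meas by measurable
  with finite have "emeasure P {x\<in>space P. T x = \<infinity>} = 0"
    by (subst (asm) AE_iff_measurable[OF _ refl]) auto
  with T_meas adapted show ?thesis unfolding is_stopping_time_def by blast
qed

lemma sets_pair_measure_mono:
  assumes "space A1 = space A2" "sets A1 \<subseteq> sets A2"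
  shows "sets (A1 \<Otimes>\<^sub>M C) \<subseteq> sets (A2 \<Otimes>\<^sub>M C)"
  unfolding sets_pair_measure assms(1) by (rule sigma_sets_mono') (use assms(2) in blast)

lemma AE_pair_measure_fst:
  assumes "sigma_finite_measure N" "AE x in M. P x"
  shows "AE p in M \<Otimes>\<^sub>M N. P (fst p)"
proof -
  from assms(2) obtain A where "{x\<in>space M. \<not> P x} \<subseteq> A" "A \<in> null_sets M" by (auto elim!: AE_E)
  moreover have "A \<times> space N \<in> null_sets (M \<Otimes>\<^sub>M N)"
    using calculation(2) by (intro sigma_finite_measure.times_in_null_sets1[OF assms(1)]) auto
  ultimately show ?thesis by (intro AE_I'[of "A \<times> space N"]) (auto simp: space_pair_measure)
qed

lemma AE_pair_measure_snd:
  assumes "sigma_finite_measure N" "AE y in N. P y"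
  shows "AE p in M \<Otimes>\<^sub>M N. P (snd p)"
proof -
  from assms(2) obtain A where "{y\<in>space N. \<not> P y} \<subseteq> A" "A \<in> null_sets N" by (auto elim!: AE_E)
  moreover have "space M \<times> A \<in> null_sets (M \<Otimes>\<^sub>M N)"
    using calculation(2) by (intro sigma_finite_measure.times_in_null_sets2[OF assms(1)]) auto
  ultimately show ?thesis by (intro AE_I'[of "space M \<times> A"]) (auto simp: space_pair_measure)
qed

lemma null_sets_density_pos:
  assumes "A \<in> null_sets (density M f)" "f \<in> borel_measurable M" "\<And>x. x \<in> space M \<Longrightarrow> 0 < f x"
  shows "A \<in> null_sets M"
proof -
  have A: "A \<in> sets M" and f_0: "AE x in M. x \<in> A \<longrightarrow> f x = 0"
    using assms(1,2) by (auto simp: null_sets_density_iff)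
  from f_0 have "AE x in M. x \<notin> A" by (rule AE_mp) (intro AE_I2, use assms(3) in force)
  then show ?thesis using A by (simp add: AE_iff_null_sets)
qed

lemma unit_ball_vol_neq_0: "unit_ball_vol (real n) \<noteq> 0"
  using unit_ball_vol_pos[of "real n"] by linarith

lemma emeasure_lborel_compl_cball_neq_0: "emeasure lborel (- cball (0::'a::euclidean_space) R) \<noteq> 0"
proof
  obtain c :: 'a where c: "norm c = \<bar>R\<bar> + 2" using vector_choose_size[of "\<bar>R\<bar> + 2"] by auto
  have "R < norm y" if "y \<in> ball c 1" for y
    using that c norm_triangle_ineq2[of c y] by (simp add: dist_norm)
  then have "ball c 1 \<subseteq> - cball 0 R" by fastforce
  moreover assume "emeasure lborel (- cball (0::'a) R) = 0"
  ultimately have "emeasure lborel (ball c 1) = 0"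
    by (metis emeasure_mono sets_lborel borel_open open_Compl closed_cball le_zero_eq)
  then show False by (simp add: emeasure_ball unit_ball_vol_neq_0)
qed

section \<open>Uniform weights on the unit ball\<close>

abbreviation uniform_unit_ball :: "'a::euclidean_space measure" where
  "uniform_unit_ball \<equiv> uniform_measure (restrict_space lborel (ball 0 1)) (ball 0 1)"

lemma prob_space_uniform_unit_ball: "prob_space (uniform_unit_ball :: 'a::euclidean_space measure)"
  by (rule prob_space_uniform_measure)
     (simp_all add: emeasure_restrict_space emeasure_ball unit_ball_vol_neq_0)

lemma emeasure_uniform_unit_ball_ball:
  assumes "0 \<le> r" "r \<le> 1"
  shows "emeasure (uniform_unit_ball :: 'a::euclidean_space measure) (ball 0 r) =
           ennreal (r ^ DIM('a))"
proof -
  have "ball (0::'a) r \<subseteq> ball 0 1" using assms by auto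
  with assms show ?thesis
    by (subst emeasure_uniform_measure)
       (simp_all add: sets_restrict_space_iff emeasure_restrict_space emeasure_ball Int_absorb1
                      divide_ennreal ennreal_mult[symmetric] unit_ball_vol_neq_0)
qed

lemma prob_space_ball_seq_space: "prob_space ball_seq_space"
  unfolding ball_seq_space_def by (intro prob_space_PiM prob_space_uniform_unit_ball)

lemma space_ball_seq_space: "space ball_seq_space = {ws. \<forall>k. ws k \<in> ball 0 1}"
  unfolding ball_seq_space_def by (auto simp: space_PiM PiE_def Pi_def space_restrict_space)

lemma borel_measurable_ball_seq_norm [measurable]:
  "(\<lambda>ws. norm (ws k)) \<in> borel_measurable ball_seq_space"
proof -
  have "norm \<in> borel_measurable (uniform_unit_ball :: (real^'n) measure)"
    by (subst measurable_cong_sets[OF sets_uniform_measure refl])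
       (intro measurable_restrict_space1, simp)
  then show ?thesis
    unfolding ball_seq_space_def
      by (intro measurable_compose[OF measurable_component_singleton]) auto
qed

lemma AE_ball_seq_frequently_norm_ge:
  assumes r: "0 \<le> r" "r < 1"
  shows "AE ws in (ball_seq_space :: (nat \<Rightarrow> real^'n) measure).
           \<exists>\<^sub>F k in sequentially. r \<le> norm (ws k)"
proof -
  let ?W = "ball_seq_space :: (nat \<Rightarrow> real^'n) measure"
  let ?U = "uniform_unit_ball :: (real^'n) measure"
  define S where "S K = {ws\<in>space ?W. \<forall>k\<ge>K. norm (ws k) < r}" for K
  have "S K \<in> null_sets ?W" for K
  proof -
    have "emeasure ?W (S K) \<le> ennreal ((r ^ CARD('n)) ^ n)" for n
    proof -
      let ?J = "{K..<K+n}"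
      let ?E = "prod_emb UNIV (\<lambda>_. ?U) ?J (Pi\<^sub>E ?J (\<lambda>_. ball 0 r))"
      have ball_sets: "ball (0::real^'n) r \<in> sets ?U"
        using r by (auto simp: sets_restrict_space_iff)
      have "S K \<subseteq> ?E"
        by (auto simp: S_def prod_emb_def space_ball_seq_space ball_seq_space_def space_PiM
                       space_restrict_space)
      then have "emeasure ?W (S K) \<le> emeasure ?W ?E"
        unfolding ball_seq_space_def using ball_sets by (intro emeasure_mono sets_PiM_I) auto
      also have "\<dots> = (\<Prod>i\<in>?J. emeasure ?U (ball 0 r))"
        unfolding ball_seq_space_def using ball_sets
        by (intro emeasure_PiM_emb) (auto simp: prob_space_uniform_unit_ball)
      also have "\<dots> = ennreal ((r ^ CARD('n)) ^ n)"
        using r by (simp add: emeasure_uniform_unit_ball_ball ennreal_power)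
      finally show ?thesis .
    qed
    then have "emeasure ?W (S K) = 0"
      using r
        by (intro ennreal_le_power_imp_zero[of "r ^ CARD('n)"]) (auto simp: power_less_one_iff)
    moreover have "S K \<in> sets ?W" unfolding S_def by measurable
    ultimately show ?thesis by auto
  qed
  then have "(\<Union>K. S K) \<in> null_sets ?W" by auto
  then show ?thesis
    by (rule AE_I') (auto simp: S_def not_frequently eventually_sequentially not_le)
qed

section \<open>Brownian motion\<close>

lemma brownian_motion_prob_space: "brownian_motion M F B \<Longrightarrow> prob_space M"
  by (simp add: brownian_motion_def)

lemma brownian_motion_space_filtration:
  "brownian_motion M F B \<Longrightarrow> 0 \<le> t \<Longrightarrow> space (F t) = space M"
  by (simp add: brownian_motion_def is_filtration_def)

lemma brownian_motion_sets_filtration: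
  "brownian_motion M F B \<Longrightarrow> 0 \<le> t \<Longrightarrow> sets (F t) \<subseteq> sets M"
  by (simp add: brownian_motion_def is_filtration_def)

lemma brownian_motion_filtration_mono:
  "brownian_motion M F B \<Longrightarrow> 0 \<le> s \<Longrightarrow> s \<le> t \<Longrightarrow> sets (F s) \<subseteq> sets (F t)"
  by (simp add: brownian_motion_def is_filtration_def)

lemma brownian_motion_continuous:
  "brownian_motion M F B \<Longrightarrow> \<omega> \<in> space M \<Longrightarrow> continuous_on {0..} (\<lambda>t. B t \<omega>)"
  by (simp add: brownian_motion_def)

lemma brownian_motion_zero: "brownian_motion M F B \<Longrightarrow> \<omega> \<in> space M \<Longrightarrow> B 0 \<omega> = 0"
  by (simp add: brownian_motion_def)

lemma brownian_motion_measurable_filtration: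
  assumes "brownian_motion M F B" "0 \<le> u" "u \<le> t"
  shows "B u \<in> borel_measurable (F t)"
proof -
  have "subalgebra (F t) (F u)"
    using assms by (simp add: subalgebra_def brownian_motion_space_filtration
                              brownian_motion_filtration_mono)
  moreover have "B u \<in> borel_measurable (F u)" using assms by (simp add: brownian_motion_def)
  ultimately show ?thesis by (rule measurable_from_subalg)
qed

lemma brownian_motion_measurable:
  assumes "brownian_motion M F B" "0 \<le> u"
  shows "B u \<in> borel_measurable M"
proof -
  have "subalgebra M (F u)"
    using assms by (simp add: subalgebra_def brownian_motion_space_filtration
                              brownian_motion_sets_filtration)
  moreover have "B u \<in> borel_measurable (F u)" using assms by (simp add: brownian_motion_def)
  ultimately show ?thesis by (rule measurable_from_subalg)
qed

lemma brownian_motion_increment_indep: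
  assumes "brownian_motion M F B" "0 \<le> s" "s < t" "A \<in> sets (F s)" "C \<in> sets borel"
  shows "measure M (A \<inter> {\<omega>\<in>space M. B t \<omega> - B s \<omega> \<in> C}) =
           measure M A * measure M {\<omega>\<in>space M. B t \<omega> - B s \<omega> \<in> C}"
  using assms(1)[unfolded brownian_motion_def, THEN conjunct2, THEN conjunct2, THEN conjunct2,
                 THEN conjunct2, rule_format, OF assms(2,3), THEN conjunct2] assms(4,5)
  by blast

text \<open>All unit increments have the standard Gaussian law, whose density is positive, so it
  charges the complement of every ball.\<close>
lemma brownian_unit_increment_cball_prob:
  fixes B :: "real \<Rightarrow> 'a \<Rightarrow> real^'n"
  assumes bm: "brownian_motion M F B"
  obtains p where "p < 1"
    "\<And>s. 0 \<le> s \<Longrightarrow> measure M {\<omega>\<in>space M. B (s + 1) \<omega> - B s \<omega> \<in> cball 0 R} = p"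
proof -
  interpret prob_space M using bm by (rule brownian_motion_prob_space)
  define f where "f x = ennreal (\<Prod>i\<in>UNIV. normal_density 0 1 (x $ i))" for x :: "real^'n"
  define Q where "Q = density lborel f"
  have [measurable]: "f \<in> borel_measurable borel" unfolding f_def by measurable
  have Y_meas: "(\<lambda>\<omega>. B (s + 1) \<omega> - B s \<omega>) \<in> borel_measurable M" if "0 \<le> s" for s
    using that by (intro borel_measurable_diff brownian_motion_measurable[OF bm]) auto
  have law: "distr M borel (\<lambda>\<omega>. B (s + 1) \<omega> - B s \<omega>) = Q" if "0 \<le> s" for s
    using bm that unfolding brownian_motion_def Q_def f_def by simp
  interpret Q: prob_space Q using prob_space_distr[OF Y_meas] law by fastforce
  have "Q.prob (- cball 0 R) \<noteq> 0"
  proof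
    assume "Q.prob (- cball 0 R) = 0"
    moreover have "- cball 0 R \<in> sets Q" by (simp add: Q_def)
    ultimately have "- cball 0 R \<in> null_sets Q"
      by (intro null_setsI) (simp_all add: Q.emeasure_eq_measure)
    then have "- cball 0 R \<in> null_sets (lborel :: (real^'n) measure)"
      unfolding Q_def
      by (rule null_sets_density_pos) (auto simp: f_def normal_density_pos prod_pos)
    then show False using emeasure_lborel_compl_cball_neq_0 by blast
  qed
  then have "Q.prob (cball 0 R) < 1"
    using Q.prob_compl[of "cball 0 R"] measure_nonneg[of Q "- cball 0 R"]
    by (simp add: Q_def Compl_eq_Diff_UNIV)
  moreover have "measure M {\<omega>\<in>space M. B (s + 1) \<omega> - B s \<omega> \<in> cball 0 R} = Q.prob (cball 0 R)"
    if "0 \<le> s" for s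
    using measure_distr[OF Y_meas[OF that], of "cball 0 R"] law[OF that]
    by (simp add: vimage_def Int_def conj_commute)
  ultimately show ?thesis by (rule that)
qed

lemma brownian_increment_sets_filtration:
  assumes bm: "brownian_motion M F B" and "0 \<le> s" "s \<le> u" "u \<le> t" "C \<in> sets borel"
  shows "{\<omega>\<in>space M. B u \<omega> - B s \<omega> \<in> C} \<in> sets (F t)"
proof -
  have "(\<lambda>\<omega>. B u \<omega> - B s \<omega>) \<in> borel_measurable (F t)"
    using assms by (intro borel_measurable_diff brownian_motion_measurable_filtration[OF bm]) auto
  from measurable_sets[OF this \<open>C \<in> sets borel\<close>] show ?thesis
    using assms by (simp add: brownian_motion_space_filtration vimage_def Int_def conj_commute)
qed

lemma brownian_unit_increments_sets_filtration:
  assumes bm: "brownian_motion M F B" and C: "C \<in> sets borel"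
  shows "{\<omega>\<in>space M. \<forall>j<m. B (real j + 1) \<omega> - B (real j) \<omega> \<in> C} \<in> sets (F (real m))"
proof -
  have sp: "space (F (real m)) = space M" by (simp add: brownian_motion_space_filtration[OF bm])
  have "{\<omega>\<in>space (F (real m)). \<forall>j\<in>{..<m}. B (real j + 1) \<omega> - B (real j) \<omega> \<in> C} \<in> sets (F (real m))"
  proof (rule sets.sets_Collect_finite_All)
    fix j assume "j \<in> {..<m}"
    then show "{\<omega>\<in>space (F (real m)). B (real j + 1) \<omega> - B (real j) \<omega> \<in> C} \<in> sets (F (real m))"
      unfolding sp using C by (intro brownian_increment_sets_filtration[OF bm]) auto
  qed simp
  then show ?thesis by (simp only: sp lessThan_iff Ball_def)
qed

lemma brownian_unit_increments_prob:
  fixes B :: "real \<Rightarrow> 'a \<Rightarrow> real^'n"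
  assumes bm: "brownian_motion M F B" and C: "C \<in> sets borel"
    and p: "\<And>j::nat. measure M {\<omega>\<in>space M. B (real j + 1) \<omega> - B (real j) \<omega> \<in> C} = p"
  shows "measure M {\<omega>\<in>space M. \<forall>j<m. B (real j + 1) \<omega> - B (real j) \<omega> \<in> C} = p ^ m"
proof (induction m)
  case 0
  then show ?case using brownian_motion_prob_space[OF bm] by (simp add: prob_space.prob_space)
next
  case (Suc m)
  let ?A = "{\<omega>\<in>space M. \<forall>j<m. B (real j + 1) \<omega> - B (real j) \<omega> \<in> C}"
  let ?I = "{\<omega>\<in>space M. B (real m + 1) \<omega> - B (real m) \<omega> \<in> C}"
  have "{\<omega>\<in>space M. \<forall>j<Suc m. B (real j + 1) \<omega> - B (real j) \<omega> \<in> C} = ?A \<inter> ?I"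
    by (auto simp: less_Suc_eq)
  also have "measure M (?A \<inter> ?I) = measure M ?A * measure M ?I"
    by (rule brownian_motion_increment_indep
              [OF bm _ _ brownian_unit_increments_sets_filtration[OF bm C] C])
       simp_all
  also have "\<dots> = p ^ Suc m" using Suc.IH p[of m] by simp
  finally show ?case .
qed

lemma AE_brownian_unit_increment_gt:
  fixes B :: "real \<Rightarrow> 'a \<Rightarrow> real^'n"
  assumes bm: "brownian_motion M F B"
  shows "AE \<omega> in M. \<exists>j::nat. R < norm (B (real j + 1) \<omega> - B (real j) \<omega>)"
proof -
  obtain p where p: "p < 1"
    "\<And>s. 0 \<le> s \<Longrightarrow> measure M {\<omega>\<in>space M. B (s + 1) \<omega> - B s \<omega> \<in> cball 0 R} = p"
    using brownian_unit_increment_cball_prob[OF bm, where R=R] by blast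
  define A where "A m = {\<omega>\<in>space M. \<forall>j<m. B (real j + 1) \<omega> - B (real j) \<omega> \<in> cball 0 R}" for m
  have cball_sets: "cball 0 R \<in> sets borel" by simp
  have A_sets: "A m \<in> sets M" for m
    unfolding A_def
    by (rule subsetD[OF brownian_motion_sets_filtration[OF bm of_nat_0_le_iff]
                        brownian_unit_increments_sets_filtration[OF bm cball_sets]])
  have "(\<Inter>m. A m) \<in> null_sets M"
  proof -
    interpret prob_space M using bm by (rule brownian_motion_prob_space)
    have "emeasure M (\<Inter>m. A m) \<le> ennreal (p ^ m)" for m
    proof -
      have "emeasure M (\<Inter>m. A m) \<le> emeasure M (A m)" using A_sets by (intro emeasure_mono) auto
      also have "\<dots> = ennreal (p ^ m)"
        unfolding emeasure_eq_measure A_def 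
        by (simp only: brownian_unit_increments_prob[OF bm cball_sets p(2)[OF of_nat_0_le_iff]])
      finally show ?thesis .
    qed
    moreover have "0 \<le> p" unfolding p(2)[OF order_refl, symmetric] by (rule measure_nonneg)
    ultimately have "emeasure M (\<Inter>m. A m) = 0" by (intro ennreal_le_power_imp_zero[OF _ p(1)])
    moreover have "(\<Inter>m. A m) \<in> sets M" using A_sets by blast
    ultimately show ?thesis by (rule null_setsI)
  qed
  then show ?thesis by (rule AE_I') (auto simp: A_def not_less)
qed

lemma AE_brownian_hits_frontier:
  fixes B :: "real \<Rightarrow> 'a \<Rightarrow> real^'n"
  assumes bm: "brownian_motion M F B" and "bounded D" "x0 \<in> D"
  shows "AE \<omega> in M. \<exists>u\<ge>0. x0 + B u \<omega> \<in> frontier D"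
proof -
  obtain R where R: "\<And>x. x \<in> D \<Longrightarrow> norm x \<le> R" using \<open>bounded D\<close> by (auto simp: bounded_iff)
  show ?thesis
    using AE_brownian_unit_increment_gt[OF bm, of "2 * R"] AE_space
  proof eventually_elim
    case (elim \<omega>)
    then obtain j :: nat where "2 * R < norm ((x0 + B (real j + 1) \<omega>) - (x0 + B (real j) \<omega>))"
      by auto
    moreover have "continuous_on {0..} (\<lambda>u. x0 + B u \<omega>)"
      using brownian_motion_continuous[OF bm elim(2)] by (intro continuous_intros)
    ultimately show ?case
      using continuous_path_hits_frontier
              [where p="\<lambda>u. x0 + B u \<omega>" and s="real j" and u="real j + 1", OF _ _ R]
            \<open>x0 \<in> D\<close> brownian_motion_zero[OF bm elim(2)] by auto
  qed
qed

section \<open>The random times along a single path\<close>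

lemma tau_exit_eq_Inf:
  "tau_exit D x0 B (\<omega>, ws) = Inf (ennreal ` {u. 0 \<le> u \<and> x0 + B u \<omega> \<in> frontier D})"
  unfolding tau_exit_def by (simp add: setcompr_eq_image)

lemma tau_seq_Suc_infinity:
  "tau_seq D x0 \<epsilon> B k p = \<infinity> \<Longrightarrow> tau_seq D x0 \<epsilon> B (Suc k) p = \<infinity>"
  by (cases p) simp

lemma tau_seq_Suc_ennreal:
  assumes "tau_seq D x0 \<epsilon> B k (\<omega>, ws) = ennreal s" "0 \<le> s"
  shows "tau_seq D x0 \<epsilon> B (Suc k) (\<omega>, ws) = Inf (ennreal ` {u. s \<le> u \<and>
           norm (B u \<omega> - B s \<omega>) = min \<epsilon> (infdist (x0 + B s \<omega>) (frontier D)) * norm (ws k)})"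
  using assms by (simp add: setcompr_eq_image)

declare tau_seq.simps(2) [simp del]

lemma tau_seq_Suc_step:
  fixes B :: "real \<Rightarrow> 'a \<Rightarrow> real^'n"
  assumes cont: "continuous_on {0..} (\<lambda>t. B t \<omega>)"
    and hit: "x0 + B e \<omega> \<in> frontier D" and w: "norm (ws k) \<le> 1" and "0 \<le> \<epsilon>"
    and tau: "tau_seq D x0 \<epsilon> B k (\<omega>, ws) = ennreal s" and "0 \<le> s" "s \<le> e"
  obtains s' where "s \<le> s'" "s' \<le> e" "tau_seq D x0 \<epsilon> B (Suc k) (\<omega>, ws) = ennreal s'"
    "norm (B s' \<omega> - B s \<omega>) = min \<epsilon> (infdist (x0 + B s \<omega>) (frontier D)) * norm (ws k)"
proof -
  let ?d = "infdist (x0 + B s \<omega>) (frontier D)"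
  let ?r = "min \<epsilon> ?d * norm (ws k)"
  have "0 \<le> ?r" using \<open>0 \<le> \<epsilon>\<close> infdist_nonneg[of _ "frontier D"] by auto
  have "?r \<le> min \<epsilon> ?d * 1"
    using w \<open>0 \<le> \<epsilon>\<close> infdist_nonneg[of _ "frontier D"] by (intro mult_left_mono) auto
  also have "\<dots> \<le> ?d" by simp
  also have "\<dots> \<le> norm (B e \<omega> - B s \<omega>)"
    using infdist_le[OF hit, of "x0 + B s \<omega>"] by (simp add: dist_norm norm_minus_commute)
  finally have "?r \<le> norm (B e \<omega> - B s \<omega>)" .
  moreover have "continuous_on {s..} (\<lambda>t. B t \<omega>)"
    using \<open>0 \<le> s\<close> by (intro continuous_on_subset[OF cont]) auto
  ultimately obtain s' where "s \<le> s'" "s' \<le> e" "norm (B s' \<omega> - B s \<omega>) = ?r"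
      "Inf (ennreal ` {u. s \<le> u \<and> norm (B u \<omega> - B s \<omega>) = ?r}) = ennreal s'"
    using first_sphere_hit_exists[of s "\<lambda>t. B t \<omega>" e ?r] \<open>0 \<le> ?r\<close> assms(6,7) by blast
  then show ?thesis using tau_seq_Suc_ennreal[OF tau \<open>0 \<le> s\<close>] by (intro that) auto
qed

lemma tau_seq_before_hit:
  fixes B :: "real \<Rightarrow> 'a \<Rightarrow> real^'n"
  assumes cont: "continuous_on {0..} (\<lambda>t. B t \<omega>)" and "0 \<le> e"
    and hit: "x0 + B e \<omega> \<in> frontier D" and w: "\<And>k. norm (ws k) \<le> 1" and "0 \<le> \<epsilon>"
  shows "\<exists>s. 0 \<le> s \<and> s \<le> e \<and> tau_seq D x0 \<epsilon> B k (\<omega>, ws) = ennreal s"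
proof (induction k)
  case 0
  then show ?case using \<open>0 \<le> e\<close> by auto
next
  case (Suc k)
  then obtain s where s: "0 \<le> s" "s \<le> e" "tau_seq D x0 \<epsilon> B k (\<omega>, ws) = ennreal s" by blast
  obtain s' where "s \<le> s'" "s' \<le> e" "tau_seq D x0 \<epsilon> B (Suc k) (\<omega>, ws) = ennreal s'"
    by (rule tau_seq_Suc_step[OF cont hit w[of k] \<open>0 \<le> \<epsilon>\<close> s(3,1,2)])
  then show ?case using s(1) by (intro exI[of _ s']) auto
qed

lemma tau_exit_first_hit:
  fixes B :: "real \<Rightarrow> 'a \<Rightarrow> real^'n"
  assumes cont: "continuous_on {0..} (\<lambda>t. B t \<omega>)" and hit: "0 \<le> u" "x0 + B u \<omega> \<in> frontier D"
  obtains e where "0 \<le> e" "x0 + B e \<omega> \<in> frontier D"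
    "\<And>v. 0 \<le> v \<Longrightarrow> x0 + B v \<omega> \<in> frontier D \<Longrightarrow> e \<le> v" "tau_exit D x0 B (\<omega>, ws) = ennreal e"
proof -
  let ?E = "{v. 0 \<le> v \<and> x0 + B v \<omega> \<in> frontier D}"
  have "continuous_on {0..} (\<lambda>v. x0 + B v \<omega>)" by (intro continuous_intros cont)
  then have E: "closed ?E" "?E \<noteq> {}" "\<And>v. v \<in> ?E \<Longrightarrow> 0 \<le> v"
    using closed_hitting_set[of 0 _ "frontier D"] hit by auto
  have "Inf ?E \<le> v" if "v \<in> ?E" for v using that by (intro cInf_lower) (auto simp: bdd_below_def)
  with Inf_ennreal_image_closed[OF E] show ?thesis
    by (intro that[of "Inf ?E"]) (auto simp: tau_exit_eq_Inf)
qed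

lemma tau_seq_tau_exit_finite:
  fixes B :: "real \<Rightarrow> 'a \<Rightarrow> real^'n"
  assumes cont: "continuous_on {0..} (\<lambda>t. B t \<omega>)" and hit: "0 \<le> u" "x0 + B u \<omega> \<in> frontier D"
    and w: "\<And>k. norm (ws k) \<le> 1" and "0 \<le> \<epsilon>"
  shows "tau_exit D x0 B (\<omega>, ws) \<noteq> \<infinity>" "tau_seq D x0 \<epsilon> B k (\<omega>, ws) \<noteq> \<infinity>"
proof -
  obtain e where e: "0 \<le> e" "x0 + B e \<omega> \<in> frontier D"
      "\<And>v. 0 \<le> v \<Longrightarrow> x0 + B v \<omega> \<in> frontier D \<Longrightarrow> e \<le> v" "tau_exit D x0 B (\<omega>, ws) = ennreal e"
    using tau_exit_first_hit[where B=B and \<omega>=\<omega> and ws=ws, OF cont hit] by blast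
  then show "tau_exit D x0 B (\<omega>, ws) \<noteq> \<infinity>" by simp
  show "tau_seq D x0 \<epsilon> B k (\<omega>, ws) \<noteq> \<infinity>"
    using tau_seq_before_hit[where B=B and \<omega>=\<omega> and ws=ws and k=k, OF cont e(1,2) w \<open>0 \<le> \<epsilon>\<close>] by auto
qed

lemma tau_seq_tendsto_tau_exit:
  fixes B :: "real \<Rightarrow> 'a \<Rightarrow> real^'n"
  assumes cont: "continuous_on {0..} (\<lambda>t. B t \<omega>)" and "open D" and start: "x0 + B 0 \<omega> \<in> D"
    and hit: "0 \<le> u" "x0 + B u \<omega> \<in> frontier D"
    and w: "\<And>k. norm (ws k) \<le> 1" and "0 < \<epsilon>" "0 < r"
    and freq: "\<exists>\<^sub>F k in sequentially. r \<le> norm (ws k)"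
  shows "(\<lambda>k. tau_seq D x0 \<epsilon> B k (\<omega>, ws)) \<longlonglongrightarrow> tau_exit D x0 B (\<omega>, ws)"
proof -
  obtain e where e: "0 \<le> e" "x0 + B e \<omega> \<in> frontier D"
      "\<And>v. 0 \<le> v \<Longrightarrow> x0 + B v \<omega> \<in> frontier D \<Longrightarrow> e \<le> v" "tau_exit D x0 B (\<omega>, ws) = ennreal e"
    using tau_exit_first_hit[where B=B and \<omega>=\<omega>, OF cont hit] by blast
  define s where "s k = enn2real (tau_seq D x0 \<epsilon> B k (\<omega>, ws))" for k
  have s: "0 \<le> s k" "s k \<le> e" "tau_seq D x0 \<epsilon> B k (\<omega>, ws) = ennreal (s k)" for k
    using tau_seq_before_hit[where B=B and \<omega>=\<omega> and ws=ws and k=k,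
                             OF cont e(1,2) w less_imp_le[OF \<open>0 < \<epsilon>\<close>]]
    by (auto simp: s_def)
  have step: "s k \<le> s (Suc k) \<and> norm (B (s (Suc k)) \<omega> - B (s k) \<omega>) =
                min \<epsilon> (infdist (x0 + B (s k) \<omega>) (frontier D)) * norm (ws k)" for k
  proof -
    obtain s' where "s k \<le> s'" "s' \<le> e" "tau_seq D x0 \<epsilon> B (Suc k) (\<omega>, ws) = ennreal s'"
        "norm (B s' \<omega> - B (s k) \<omega>) = min \<epsilon> (infdist (x0 + B (s k) \<omega>) (frontier D)) * norm (ws k)"
      by (rule tau_seq_Suc_step[where B=B and \<omega>=\<omega> and ws=ws, OF cont e(2) w
                                 less_imp_le[OF \<open>0 < \<epsilon>\<close>] s(3,1,2)])
    moreover have "s' = s (Suc k)" using s[of "Suc k"] calculation(1,3) s(1)[of k] by simp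
    ultimately show ?thesis by simp
  qed
  have inside: "x0 + B v \<omega> \<in> D" if "0 \<le> v" "v < e" for v
  proof (rule continuous_path_stays_inside[of 0 v])
    show "continuous_on {0..v} (\<lambda>v. x0 + B v \<omega>)"
      by (intro continuous_intros continuous_on_subset[OF cont]) auto
    show "\<And>v'. v' \<in> {0..v} \<Longrightarrow> x0 + B v' \<omega> \<notin> frontier D" using e(3) that by force
  qed (use that start in auto)
  have "frontier D \<noteq> {}" using e(2) by auto
  then have "s \<longlonglongrightarrow> e"
    using step s \<open>0 < \<epsilon>\<close> \<open>0 < r\<close> freq
    by (intro increasing_steps_tendsto_exit[OF cont \<open>open D\<close>, of s e x0 \<epsilon> ws r]
              incseq_SucI inside) auto
  then show ?thesis unfolding s(3) e(4) by (rule tendsto_ennrealI)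
qed

lemma tau_exit_le_iff:
  fixes B :: "real \<Rightarrow> 'a \<Rightarrow> real^'n"
  assumes cont: "continuous_on {0..} (\<lambda>t. B t \<omega>)" and "frontier D \<noteq> {}" "0 \<le> t"
  shows "tau_exit D x0 B (\<omega>, ws) \<le> ennreal t \<longleftrightarrow>
    (\<forall>m::nat. \<exists>q\<in>rat_grid t.
       0 \<le> q \<and> - inverse (real (Suc m)) < - infdist (x0 + B q \<omega>) (frontier D))"
proof -
  have path: "continuous_on {0..} (\<lambda>u. x0 + B u \<omega>)" by (intro continuous_intros cont)
  have "continuous_on {0..t} (\<lambda>u. - infdist (x0 + B u \<omega>) (frontier D))"
    by (intro continuous_intros continuous_on_subset[OF path]) auto
  note approx = exists_nonneg_iff_rat_grid[OF this order_refl \<open>0 \<le> t\<close>]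
  show ?thesis
    unfolding tau_exit_eq_Inf first_hit_le_iff[OF path frontier_closed assms(2,3)] approx ..
qed

lemma tau_seq_Suc_le_iff:
  fixes B :: "real \<Rightarrow> 'a \<Rightarrow> real^'n"
  assumes cont: "continuous_on {0..} (\<lambda>t. B t \<omega>)" and "0 \<le> \<epsilon>" "0 \<le> t"
    and tau: "tau_seq D x0 \<epsilon> B k (\<omega>, ws) = ennreal s" "0 \<le> s"
  defines "r \<equiv> min \<epsilon> (infdist (x0 + B s \<omega>) (frontier D)) * norm (ws k)"
  shows "tau_seq D x0 \<epsilon> B (Suc k) (\<omega>, ws) \<le> ennreal t \<longleftrightarrow>
    s \<le> t \<and> (\<forall>m::nat. \<exists>q\<in>rat_grid t. s \<le> q \<and> - inverse (real (Suc m)) < norm (B q \<omega> - B s \<omega>) - r)"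
proof -
  have cont_s: "continuous_on {s..} (\<lambda>t. B t \<omega>)"
    using \<open>0 \<le> s\<close> by (intro continuous_on_subset[OF cont]) auto
  have "0 \<le> r" unfolding r_def using \<open>0 \<le> \<epsilon>\<close> infdist_nonneg[of _ "frontier D"] by auto
  have "tau_seq D x0 \<epsilon> B (Suc k) (\<omega>, ws) \<le> ennreal t \<longleftrightarrow>
      s \<le> t \<and> (\<exists>u\<in>{s..t}. 0 \<le> norm (B u \<omega> - B s \<omega>) - r)"
    unfolding tau_seq_Suc_ennreal[OF tau] r_def[symmetric]
    by (rule first_sphere_hit_le_iff[OF cont_s \<open>0 \<le> s\<close> \<open>0 \<le> r\<close> \<open>0 \<le> t\<close>])
  also have "\<dots> \<longleftrightarrow>
      s \<le> t \<and> (\<forall>m::nat. \<exists>q\<in>rat_grid t. s \<le> q \<and> - inverse (real (Suc m)) < norm (B q \<omega> - B s \<omega>) - r)"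
  proof (cases "s \<le> t")
    case True
    have "continuous_on {s..t} (\<lambda>u. norm (B u \<omega> - B s \<omega>) - r)"
      by (intro continuous_intros continuous_on_subset[OF cont_s]) auto
    then show ?thesis by (simp only: exists_nonneg_iff_rat_grid[OF _ \<open>0 \<le> s\<close> True])
  qed simp
  finally show ?thesis .
qed

section \<open>Adaptedness\<close>

lemma space_bar_space: "space (bar_space M) = space M \<times> space ball_seq_space"
  by (simp add: bar_space_def space_pair_measure)

lemma space_bar_filtration:
  "brownian_motion M F B \<Longrightarrow> 0 \<le> t \<Longrightarrow> space (bar_filtration F t) = space (bar_space M)"
  by (simp add: bar_filtration_def bar_space_def space_pair_measure
                brownian_motion_space_filtration)

lemma sets_bar_filtration_mono:
  "brownian_motion M F B \<Longrightarrow> 0 \<le> s \<Longrightarrow> s \<le> t \<Longrightarrow>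
     sets (bar_filtration F s) \<subseteq> sets (bar_filtration F t)"
  unfolding bar_filtration_def
  by (intro sets_pair_measure_mono)
     (auto simp: brownian_motion_space_filtration brownian_motion_filtration_mono)

lemma sets_bar_filtration_subset:
  "brownian_motion M F B \<Longrightarrow> 0 \<le> t \<Longrightarrow> sets (bar_filtration F t) \<subseteq> sets (bar_space M)"
  unfolding bar_filtration_def bar_space_def
  by (intro sets_pair_measure_mono)
     (auto simp: brownian_motion_space_filtration brownian_motion_sets_filtration)

lemma measurable_bar_filtration_path:
  fixes B :: "real \<Rightarrow> 'a \<Rightarrow> real^'n"
  assumes "brownian_motion M F B" "0 \<le> u" "u \<le> t"
  shows "(\<lambda>p. B u (fst p)) \<in>
           borel_measurable (bar_filtration F t :: ('a \<times> (nat \<Rightarrow> real^'n)) measure)"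
  unfolding bar_filtration_def
  by (rule measurable_compose[OF measurable_fst brownian_motion_measurable_filtration[OF assms]])

lemma measurable_bar_filtration_weight [measurable]:
  "(\<lambda>p. norm (snd p k)) \<in> borel_measurable (bar_filtration F t :: ('a \<times> (nat \<Rightarrow> real^'n)) measure)"
  unfolding bar_filtration_def
    by (rule measurable_compose[OF measurable_snd borel_measurable_ball_seq_norm])

lemma borel_measurable_infdist [measurable]: "(\<lambda>x. infdist x A) \<in> borel_measurable borel"
  by (intro borel_measurable_continuous_onI continuous_intros)

lemma tau_exit_adapted:
  fixes B :: "real \<Rightarrow> 'a \<Rightarrow> real^'n"
  assumes bm: "brownian_motion M F B" and "frontier D \<noteq> {}" "0 \<le> t"
  shows "{p\<in>space (bar_space M). tau_exit D x0 B p \<le> ennreal t} \<in> sets (bar_filtration F t)"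
proof -
  let ?N = "bar_filtration F t :: ('a \<times> (nat \<Rightarrow> real^'n)) measure"
  have "tau_exit D x0 B p \<le> ennreal t \<longleftrightarrow> (\<forall>m::nat. \<exists>q\<in>rat_grid t.
      0 \<le> q \<and> - inverse (real (Suc m)) < - infdist (x0 + B q (fst p)) (frontier D))"
    if "p \<in> space (bar_space M)" for p
  proof (cases p)
    case (Pair \<omega> ws)
    with that have "\<omega> \<in> space M" by (simp add: space_bar_space)
    from tau_exit_le_iff[where B=B and \<omega>=\<omega> and ws=ws,
                         OF brownian_motion_continuous[OF bm this] assms(2,3)]
    show ?thesis by (simp only: Pair fst_conv)
  qed
  then have "{p\<in>space (bar_space M). tau_exit D x0 B p \<le> ennreal t} = {p\<in>space ?N.
      \<forall>m::nat. \<exists>q\<in>rat_grid t.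
        0 \<le> q \<and> - inverse (real (Suc m)) < - infdist (x0 + B q (fst p)) (frontier D)}"
    unfolding space_bar_filtration[OF bm \<open>0 \<le> t\<close>] by blast
  also have "\<dots> \<in> sets ?N"
  proof (intro sets.sets_Collect_countable_All sets.sets_Collect_countable_Ex' countable_rat_grid)
    fix m :: nat and q assume "q \<in> rat_grid t"
    then have [measurable]: "(\<lambda>p. B q (fst p)) \<in> borel_measurable ?N"
      using rat_grid_bounds \<open>0 \<le> t\<close> by (auto intro: measurable_bar_filtration_path[OF bm])
    show "{p\<in>space ?N. 0 \<le> q \<and> - inverse (real (Suc m)) < - infdist (x0 + B q (fst p)) (frontier D)}
        \<in> sets ?N"
      by measurable
  qed
  finally show ?thesis .
qed

lemma measurable_bar_filtration_trunc_time:
  fixes B :: "real \<Rightarrow> 'a \<Rightarrow> real^'n" and \<sigma> :: "'a \<times> (nat \<Rightarrow> real^'n) \<Rightarrow> ennreal"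
  assumes bm: "brownian_motion M F B" and "0 \<le> t"
    and adapted: "\<And>a. 0 \<le> a \<Longrightarrow> {p\<in>space (bar_space M). \<sigma> p \<le> ennreal a} \<in> sets (bar_filtration F a)"
  shows "trunc_time \<sigma> t \<in> borel_measurable (bar_filtration F t)"
    and "(\<lambda>p. B (trunc_time \<sigma> t p) (fst p)) \<in> borel_measurable (bar_filtration F t)"
proof -
  let ?N = "bar_filtration F t :: ('a \<times> (nat \<Rightarrow> real^'n)) measure"
  have sp: "space ?N = space (bar_space M)" by (rule space_bar_filtration[OF bm \<open>0 \<le> t\<close>])
  show trunc: "trunc_time \<sigma> t \<in> borel_measurable ?N"
  proof (rule borel_measurable_trunc_time[OF \<open>0 \<le> t\<close>])
    fix a assume "0 \<le> a" "a \<le> t"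
    then show "{x\<in>space ?N. \<sigma> x \<le> ennreal a} \<in> sets ?N"
      using adapted[of a] sets_bar_filtration_mono[OF bm, of a t] unfolding sp by blast
  qed
  show "(\<lambda>p. B (trunc_time \<sigma> t p) (fst p)) \<in> borel_measurable ?N"
  proof (rule borel_measurable_at_random_time[OF \<open>0 \<le> t\<close> _ _ trunc])
    show "(\<lambda>p. B u (fst p)) \<in> borel_measurable ?N" if "0 \<le> u" "u \<le> t" for u
      using that by (rule measurable_bar_filtration_path[OF bm])
    show "continuous_on {0..t} (\<lambda>u. B u (fst p))" if "p \<in> space ?N" for p
      using that unfolding sp space_bar_space
      by (intro continuous_on_subset[OF brownian_motion_continuous[OF bm]]) auto
  qed (rule trunc_time_bounds[OF \<open>0 \<le> t\<close>])
qed

lemma tau_seq_Suc_le_iff_trunc_time: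
  fixes B :: "real \<Rightarrow> 'a \<Rightarrow> real^'n" and D :: "(real^'n) set" and x0 :: "real^'n" and k :: nat
  assumes bm: "brownian_motion M F B" and "0 \<le> \<epsilon>" "0 \<le> t" and p: "p \<in> space (bar_space M)"
  defines "\<sigma>t \<equiv> trunc_time (tau_seq D x0 \<epsilon> B k) t p"
  shows "tau_seq D x0 \<epsilon> B (Suc k) p \<le> ennreal t \<longleftrightarrow> tau_seq D x0 \<epsilon> B k p \<le> ennreal t \<and>
    (\<forall>m::nat. \<exists>q\<in>rat_grid t. \<sigma>t \<le> q \<and> - inverse (real (Suc m)) <
       norm (B q (fst p) - B \<sigma>t (fst p)) -
         min \<epsilon> (infdist (x0 + B \<sigma>t (fst p)) (frontier D)) * norm (snd p k))"
proof (cases p)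
  case (Pair \<omega> ws)
  with p have cont: "continuous_on {0..} (\<lambda>t. B t \<omega>)"
    by (intro brownian_motion_continuous[OF bm]) (simp add: space_bar_space)
  show ?thesis
  proof (cases "tau_seq D x0 \<epsilon> B k p")
    case (real s)
    with Pair have tau: "tau_seq D x0 \<epsilon> B k (\<omega>, ws) = ennreal s" by simp
    show ?thesis
      using tau_seq_Suc_le_iff[where B=B and \<omega>=\<omega> and ws=ws, OF cont \<open>0 \<le> \<epsilon>\<close> \<open>0 \<le> t\<close> tau real(1)]
            real \<open>0 \<le> t\<close>
      by (auto simp: Pair \<sigma>t_def trunc_time_def)
  next
    case top
    then show ?thesis by (simp add: tau_seq_Suc_infinity top_unique)
  qed
qed

lemma tau_seq_Suc_adapted:
  fixes B :: "real \<Rightarrow> 'a \<Rightarrow> real^'n"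
  assumes bm: "brownian_motion M F B" and "0 \<le> \<epsilon>" "0 \<le> t"
    and adapted: "\<And>a. 0 \<le> a \<Longrightarrow>
      {p\<in>space (bar_space M). tau_seq D x0 \<epsilon> B k p \<le> ennreal a} \<in> sets (bar_filtration F a)"
  shows "{p\<in>space (bar_space M). tau_seq D x0 \<epsilon> B (Suc k) p \<le> ennreal t}
           \<in> sets (bar_filtration F t)"
proof -
  let ?N = "bar_filtration F t :: ('a \<times> (nat \<Rightarrow> real^'n)) measure"
  let ?\<sigma> = "tau_seq D x0 \<epsilon> B k"
  define \<sigma>t where "\<sigma>t = trunc_time ?\<sigma> t"
  have sp: "space ?N = space (bar_space M)" by (rule space_bar_filtration[OF bm \<open>0 \<le> t\<close>])
  have \<sigma>_sets: "{p\<in>space ?N. ?\<sigma> p \<le> ennreal t} \<in> sets ?N"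
    unfolding sp by (rule adapted[OF \<open>0 \<le> t\<close>])
  note [measurable] = measurable_bar_filtration_trunc_time[OF bm \<open>0 \<le> t\<close> adapted, folded \<sigma>t_def]
  have "{p\<in>space (bar_space M). tau_seq D x0 \<epsilon> B (Suc k) p \<le> ennreal t} = {p\<in>space ?N.
      ?\<sigma> p \<le> ennreal t \<and> (\<forall>m::nat. \<exists>q\<in>rat_grid t. \<sigma>t p \<le> q \<and> - inverse (real (Suc m)) <
         norm (B q (fst p) - B (\<sigma>t p) (fst p)) -
           min \<epsilon> (infdist (x0 + B (\<sigma>t p) (fst p)) (frontier D)) * norm (snd p k))}"
    unfolding sp \<sigma>t_def using tau_seq_Suc_le_iff_trunc_time[OF bm \<open>0 \<le> \<epsilon>\<close> \<open>0 \<le> t\<close>] by blast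
  also have "\<dots> \<in> sets ?N"
  proof (rule sets.sets_Collect_conj[OF _ \<sigma>_sets],
         intro sets.sets_Collect_countable_All sets.sets_Collect_countable_Ex' countable_rat_grid)
    fix m :: nat and q assume "q \<in> rat_grid t"
    then have [measurable]: "(\<lambda>p. B q (fst p)) \<in> borel_measurable ?N"
      using rat_grid_bounds \<open>0 \<le> t\<close> by (auto intro: measurable_bar_filtration_path[OF bm])
    show "{p\<in>space ?N. \<sigma>t p \<le> q \<and> - inverse (real (Suc m)) <
        norm (B q (fst p) - B (\<sigma>t p) (fst p)) -
          min \<epsilon> (infdist (x0 + B (\<sigma>t p) (fst p)) (frontier D)) * norm (snd p k)} \<in> sets ?N"
      by measurable
  qed
  finally show ?thesis .
qed

lemma tau_seq_adapted:
  fixes B :: "real \<Rightarrow> 'a \<Rightarrow> real^'n"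
  assumes bm: "brownian_motion M F B" and "0 \<le> \<epsilon>" "0 \<le> t"
  shows "{p\<in>space (bar_space M). tau_seq D x0 \<epsilon> B k p \<le> ennreal t} \<in> sets (bar_filtration F t)"
  using \<open>0 \<le> t\<close>
proof (induction k arbitrary: t)
  case 0
  have "{p\<in>space (bar_space M). tau_seq D x0 \<epsilon> B 0 p \<le> ennreal t} = space (bar_filtration F t)"
    by (simp add: space_bar_filtration[OF bm 0])
  then show ?case by (simp only: sets.top)
next
  case (Suc k)
  then show ?case by (intro tau_seq_Suc_adapted[OF bm \<open>0 \<le> \<epsilon>\<close>])
qed

lemma AE_tau_finite_tendsto:
  fixes B :: "real \<Rightarrow> 'a \<Rightarrow> real^'n"
  assumes bm: "brownian_motion M F B" and "open D" "bounded D" "x0 \<in> D" "0 < \<epsilon>"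
  shows "AE p in bar_space M. tau_exit D x0 B p \<noteq> \<infinity> \<and> (\<forall>k. tau_seq D x0 \<epsilon> B k p \<noteq> \<infinity>) \<and>
           (\<lambda>k. tau_seq D x0 \<epsilon> B k p) \<longlonglongrightarrow> tau_exit D x0 B p"
proof -
  have W: "sigma_finite_measure ball_seq_space"
    by (rule prob_space_imp_sigma_finite[OF prob_space_ball_seq_space])
  have hits: "AE p in bar_space M. \<exists>u\<ge>0. x0 + B u (fst p) \<in> frontier D"
    unfolding bar_space_def using AE_brownian_hits_frontier[OF bm assms(3,4)]
      by (rule AE_pair_measure_fst[OF W])
  have freq: "AE p in bar_space M. \<exists>\<^sub>F k in sequentially. 1/2 \<le> norm (snd p k)"
    unfolding bar_space_def
      by (rule AE_pair_measure_snd[OF W AE_ball_seq_frequently_norm_ge]) simp_all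
  show ?thesis
    using hits freq AE_space
  proof eventually_elim
    case (elim p)
    then obtain \<omega> ws u where p: "p = (\<omega>, ws)" "\<omega> \<in> space M" "\<And>k. norm (ws k) \<le> 1"
        and hit: "0 \<le> u" "x0 + B u \<omega> \<in> frontier D"
      by (cases p) (auto simp: space_bar_space space_ball_seq_space less_imp_le)
    note cont = brownian_motion_continuous[OF bm p(2)]
    have start: "x0 + B 0 \<omega> \<in> D" using brownian_motion_zero[OF bm p(2)] assms(4) by simp
    show ?case
      using tau_seq_tau_exit_finite[where B=B and \<omega>=\<omega> and ws=ws,
                                    OF cont hit p(3) less_imp_le[OF assms(5)]]
        tau_seq_tendsto_tau_exit[where B=B and \<omega>=\<omega> and ws=ws and r="1/2",
                                 OF cont assms(2) start hit p(3) assms(5)] elim(2)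
      by (auto simp: p(1))
  qed
qed

theorem lemma2p24:
  fixes M :: "'a measure" and F :: "real \<Rightarrow> 'a measure"
    and B :: "real \<Rightarrow> 'a \<Rightarrow> real^'n"
    and D :: "(real^'n) set" and x0 :: "real^'n" and \<epsilon> :: real
  assumes "brownian_motion M F B"
    and "open D" and "bounded D" and "connected D" and "x0 \<in> D"
    and "0 < \<epsilon>" and "\<epsilon> < 1"
  shows "(\<forall>k. is_stopping_time (bar_space M) (bar_filtration F) (tau_seq D x0 \<epsilon> B k))
       \<and> is_stopping_time (bar_space M) (bar_filtration F) (tau_exit D x0 B)
       \<and> (AE p in bar_space M. (\<lambda>k. tau_seq D x0 \<epsilon> B k p) \<longlonglongrightarrow> tau_exit D x0 B p)"
proof -
  note bm = assms(1)
  have "frontier D \<noteq> {}" using assms(3,5) by (intro frontier_not_empty) auto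
  with AE_tau_finite_tendsto[OF bm assms(2,3,5,6)] show ?thesis
    using assms(6)
    by (auto intro!: is_stopping_timeI sets_bar_filtration_subset[OF bm] tau_seq_adapted[OF bm]
                     tau_exit_adapted[OF bm] elim: AE_mp)
qed

end
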